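(* For $n\ge 0$, let $T_n$ be the poset consisting of a chain $a_1<a_2<\dots<a_n$, two incomparable elements $b,c$ with $a_n<b$ and $a_n<c$, and a chain $e_1<\dots<e_n$ with $b<e_1$ and $c<e_1$ (when $n=0$, $T_0$ is a two-element antichain), and let $R_n=J(T_n)$ be its lattice of order ideals (a lattice with $2n+4$ elements, the minuscule "double tailed diamond" lattice). Then \[ \d(R_n)=\frac{2}{3}(n+3)\left(4n^2+9n+8\right). \]
   Context: $J(P)$ is the lattice of order ideals of a finite poset $P$ ordered by inclusion. For a finite poset $Q$, $\d(Q)=\sum_{(p,q)\in Q\times Q}\d(p,q)$, where $\d(p,q)$ is the graph distance in the Hasse diagram of $Q$ (edges = cover relations) and the sum runs over ordered pairs. *)

theory Defs
  imports Complex_Main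
begin

definition order_ideals :: "'a set \<Rightarrow> ('a \<Rightarrow> 'a \<Rightarrow> bool) \<Rightarrow> 'a set set" where
  "order_ideals P le = {I. I \<subseteq> P \<and> (\<forall>x\<in>I. \<forall>y\<in>P. le y x \<longrightarrow> y \<in> I)}"

definition covers :: "'a set \<Rightarrow> ('a \<Rightarrow> 'a \<Rightarrow> bool) \<Rightarrow> 'a \<Rightarrow> 'a \<Rightarrow> bool" where
  "covers Q le x y \<longleftrightarrow> x \<in> Q \<and> y \<in> Q \<and> le x y \<and> x \<noteq> y \<and>
     \<not> (\<exists>z\<in>Q. le x z \<and> x \<noteq> z \<and> le z y \<and> z \<noteq> y)"

definition hasse_adj :: "'a set \<Rightarrow> ('a \<Rightarrow> 'a \<Rightarrow> bool) \<Rightarrow> 'a \<Rightarrow> 'a \<Rightarrow> bool" where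
  "hasse_adj Q le x y \<longleftrightarrow> covers Q le x y \<or> covers Q le y x"

definition hasse_dist :: "'a set \<Rightarrow> ('a \<Rightarrow> 'a \<Rightarrow> bool) \<Rightarrow> 'a \<Rightarrow> 'a \<Rightarrow> nat" where
  "hasse_dist Q le x y = (LEAST k. \<exists>f :: nat \<Rightarrow> 'a. f 0 = x \<and> f k = y \<and>
      (\<forall>i<k. hasse_adj Q le (f i) (f (Suc i))))"

definition dist_sum :: "'a set \<Rightarrow> ('a \<Rightarrow> 'a \<Rightarrow> bool) \<Rightarrow> nat" where
  "dist_sum Q le = (\<Sum>p\<in>Q. \<Sum>q\<in>Q. hasse_dist Q le p q)"

datatype tnode = A nat | B | C | E nat

definition T_carrier :: "nat \<Rightarrow> tnode set" where
  "T_carrier n = {A i | i. 1 \<le> i \<and> i \<le> n} \<union> {B, C} \<union> {E i | i. 1 \<le> i \<and> i \<le> n}"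

fun T_level :: "nat \<Rightarrow> tnode \<Rightarrow> nat" where
  "T_level n (A i) = i"
| "T_level n B = n + 1"
| "T_level n C = n + 1"
| "T_level n (E i) = n + 1 + i"

text \<open>x \<le> y in T_n iff x = y or x lies on a strictly lower level (b, c are the only
  incomparable pair); this is the order generated by a_1<...<a_n<b,c<e_1<...<e_n.\<close>
definition T_le :: "nat \<Rightarrow> tnode \<Rightarrow> tnode \<Rightarrow> bool" where
  "T_le n x y \<longleftrightarrow> x = y \<or> T_level n x < T_level n y"

definition R :: "nat \<Rightarrow> tnode set set" where
  "R n = order_ideals (T_carrier n) (T_le n)"

end

theory Submission
  imports Defs
begin

text \<open>Every level of \<open>T_n\<close> has at most two elements, and this forces \<open>I \<subseteq> J\<close> for order
  ideals to hold exactly when \<open>I = J\<close> or \<open>I\<close> is smaller than \<open>J\<close>. So \<open>J(T_n)\<close> is a chain of ideals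
  of sizes \<open>0, \<dots>, 2n + 2\<close> together with one extra ideal of size \<open>n + 1\<close>, and the Hasse
  distance between two ideals is the difference of their sizes, except that the two ideals of
  size \<open>n + 1\<close> are at distance \<open>2\<close>. Summing these distances over the chain indices
  \<open>i, j \<le> 2n + 2\<close> gives \<open>(2n + 2)(2n + 3)(2n + 4)/3 + 2(n + 1)(n + 2) + 4\<close>.\<close>

definition hasse_walk :: "'a set \<Rightarrow> ('a \<Rightarrow> 'a \<Rightarrow> bool) \<Rightarrow> nat \<Rightarrow> 'a \<Rightarrow> 'a \<Rightarrow> bool" where
  "hasse_walk Q le k x y \<longleftrightarrow>
     (\<exists>f. f 0 = x \<and> f k = y \<and> (\<forall>i<k. hasse_adj Q le (f i) (f (Suc i))))"

lemma hasse_dist_Least_walk: "hasse_dist Q le x y = (LEAST k. hasse_walk Q le k x y)"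
  by (simp add: hasse_dist_def hasse_walk_def)

lemma hasse_adj_commute: "hasse_adj Q le x y \<longleftrightarrow> hasse_adj Q le y x"
  by (auto simp: hasse_adj_def)

lemma hasse_walk_0 [simp]: "hasse_walk Q le 0 x y \<longleftrightarrow> x = y"
  by (auto simp: hasse_walk_def)

lemma hasse_walk_Suc:
  "hasse_walk Q le (Suc k) x z \<longleftrightarrow> (\<exists>y. hasse_walk Q le k x y \<and> hasse_adj Q le y z)"
proof
  assume "hasse_walk Q le (Suc k) x z"
  then obtain f where "f 0 = x" "f (Suc k) = z" "\<forall>i<Suc k. hasse_adj Q le (f i) (f (Suc i))"
    by (auto simp: hasse_walk_def)
  then show "\<exists>y. hasse_walk Q le k x y \<and> hasse_adj Q le y z"
    by (intro exI[of _ "f k"]) (auto simp: hasse_walk_def)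
next
  assume "\<exists>y. hasse_walk Q le k x y \<and> hasse_adj Q le y z"
  then obtain y f where "f 0 = x" "f k = y" "\<forall>i<k. hasse_adj Q le (f i) (f (Suc i))"
    and "hasse_adj Q le y z"
    by (auto simp: hasse_walk_def)
  then show "hasse_walk Q le (Suc k) x z"
    unfolding hasse_walk_def by (intro exI[of _ "f(Suc k := z)"]) (auto simp: less_Suc_eq)
qed

lemma hasse_walk_Suc_0 [simp]: "hasse_walk Q le (Suc 0) x y \<longleftrightarrow> hasse_adj Q le x y"
  by (simp add: hasse_walk_Suc[of _ _ 0])

lemma hasse_walk_commute:
  assumes "hasse_walk Q le k x y"
  shows "hasse_walk Q le k y x"
proof -
  obtain f where f: "f 0 = x" "f k = y" "\<forall>i<k. hasse_adj Q le (f i) (f (Suc i))"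
    using assms by (auto simp: hasse_walk_def)
  have "hasse_adj Q le (f (k - i)) (f (k - Suc i))" if "i < k" for i
    using f(3)[rule_format, of "k - Suc i"] that
    by (simp add: Suc_diff_Suc hasse_adj_commute)
  then show ?thesis
    unfolding hasse_walk_def using f by (intro exI[of _ "\<lambda>i. f (k - i)"]) auto
qed

section \<open>Weak orders\<close>

text \<open>The ordinal sum of the antichains \<open>{x \<in> P. lev x = k}\<close>; both \<open>T_n\<close> and \<open>J(T_n)\<close>
  (levelled by cardinality) are of this kind.\<close>
definition weak_order_by :: "'a set \<Rightarrow> ('a \<Rightarrow> 'a \<Rightarrow> bool) \<Rightarrow> ('a \<Rightarrow> nat) \<Rightarrow> bool" where
  "weak_order_by P le lev \<longleftrightarrow> (\<forall>x\<in>P. \<forall>y\<in>P. le x y \<longleftrightarrow> x = y \<or> lev x < lev y)"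

definition weak_order_dist :: "('a \<Rightarrow> nat) \<Rightarrow> 'a \<Rightarrow> 'a \<Rightarrow> nat" where
  "weak_order_dist lev x y =
     (if x \<noteq> y \<and> lev x = lev y then 2 else (lev x - lev y) + (lev y - lev x))"

lemma weak_order_dist_commute: "weak_order_dist lev x y = weak_order_dist lev y x"
  by (auto simp: weak_order_dist_def)

context
  fixes P :: "'a set" and le :: "'a \<Rightarrow> 'a \<Rightarrow> bool" and lev :: "'a \<Rightarrow> nat" and M :: nat
  assumes weak: "weak_order_by P le lev" and levels: "lev ` P = {..M}"
begin

lemma level_le_top: "x \<in> P \<Longrightarrow> lev x \<le> M"
  using levels by auto

lemma covers_weak_order: "covers P le x y \<longleftrightarrow> x \<in> P \<and> y \<in> P \<and> lev y = Suc (lev x)"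
proof
  assume "covers P le x y"
  then have x: "x \<in> P" and y: "y \<in> P" and lt: "lev x < lev y"
    and no_between: "\<not> (\<exists>z\<in>P. le x z \<and> x \<noteq> z \<and> le z y \<and> z \<noteq> y)"
    using weak by (auto simp: covers_def weak_order_by_def)
  have "lev y = Suc (lev x)"
  proof (rule ccontr)
    assume "lev y \<noteq> Suc (lev x)"
    with lt have "Suc (lev x) < lev y" by simp
    moreover have "lev y \<le> M" using level_le_top[OF y] .
    ultimately have "Suc (lev x) \<in> lev ` P"
      using levels by simp
    then obtain z where "z \<in> P" "lev z = Suc (lev x)" by auto
    with no_between \<open>Suc (lev x) < lev y\<close> x y weak show False
      by (auto simp: weak_order_by_def)
  qed
  with x y show "x \<in> P \<and> y \<in> P \<and> lev y = Suc (lev x)" by simp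
next
  assume "x \<in> P \<and> y \<in> P \<and> lev y = Suc (lev x)"
  with weak show "covers P le x y"
    by (auto simp: covers_def weak_order_by_def)
qed

lemma hasse_adj_weak_order:
  "hasse_adj P le x y \<longleftrightarrow> x \<in> P \<and> y \<in> P \<and> (lev y = Suc (lev x) \<or> lev x = Suc (lev y))"
  by (auto simp: hasse_adj_def covers_weak_order)

lemma hasse_walk_level_bound:
  "hasse_walk P le k x y \<Longrightarrow> (lev x - lev y) + (lev y - lev x) \<le> k"
proof (induction k arbitrary: y)
  case (Suc k)
  then obtain z where "hasse_walk P le k x z" "hasse_adj P le z y"
    by (auto simp: hasse_walk_Suc)
  with Suc.IH[of z] show ?case
    by (auto simp: hasse_adj_weak_order)
qed simp

lemma hasse_walk_up:
  assumes "x \<in> P"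
  shows "y \<in> P \<Longrightarrow> lev y = lev x + Suc d \<Longrightarrow> hasse_walk P le (Suc d) x y"
proof (induction d arbitrary: y)
  case 0
  then show ?case using assms by (simp add: hasse_adj_weak_order)
next
  case (Suc d)
  have "lev x + Suc d \<in> lev ` P"
    using levels level_le_top[OF Suc.prems(1)] Suc.prems(2) by auto
  then obtain z where z: "z \<in> P" "lev z = lev x + Suc d" by auto
  then have "hasse_walk P le (Suc d) x z" by (rule Suc.IH)
  moreover have "hasse_adj P le z y"
    using z Suc.prems by (simp add: hasse_adj_weak_order)
  ultimately show ?case
    by (auto simp: hasse_walk_Suc[of _ _ "Suc d"])
qed

lemma hasse_walk_weak_order_dist:
  assumes "0 < M" "x \<in> P" "y \<in> P"
  shows "hasse_walk P le (weak_order_dist lev x y) x y"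
proof -
  consider "x = y" | "x \<noteq> y" "lev x = lev y" | "lev x < lev y" | "lev y < lev x"
    by (cases "lev x" "lev y" rule: linorder_cases) auto
  then show ?thesis
  proof cases
    case 2
    \<comment> \<open>two distinct elements of one level are joined through a neighbouring level, which exists as \<open>M > 0\<close>\<close>
    have "\<exists>z\<in>P. lev z = Suc (lev x) \<or> lev x = Suc (lev z)"
    proof (cases "lev x < M")
      case True
      then have "Suc (lev x) \<in> lev ` P" using levels by simp
      then show ?thesis by (metis imageE)
    next
      case False
      then have "lev x - 1 \<in> lev ` P" "lev x \<noteq> 0"
        using levels level_le_top[OF assms(2)] assms(1) by auto
      then obtain z where "z \<in> P" "lev z = lev x - 1" by auto
      with \<open>lev x \<noteq> 0\<close> show ?thesis by (intro bexI[of _ z]) simp_all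
    qed
    then obtain z where "z \<in> P" "lev z = Suc (lev x) \<or> lev x = Suc (lev z)" by blast
    with 2 assms have "hasse_walk P le (Suc 0) x z" "hasse_adj P le z y"
      by (auto simp: hasse_adj_weak_order)
    then have "hasse_walk P le (Suc (Suc 0)) x y"
      using hasse_walk_Suc[of P le "Suc 0" x y] by blast
    with 2 show ?thesis
      by (simp add: weak_order_dist_def numeral_2_eq_2)
  next
    case 3
    define d where "d = lev y - lev x - 1"
    with 3 have d: "lev y = lev x + Suc d" by simp
    then have "weak_order_dist lev x y = Suc d" by (simp add: weak_order_dist_def)
    with hasse_walk_up[OF assms(2,3) d] show ?thesis by simp
  next
    case 4
    define d where "d = lev x - lev y - 1"
    with 4 have d: "lev x = lev y + Suc d" by simp
    then have "weak_order_dist lev x y = Suc d" by (simp add: weak_order_dist_def)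
    with hasse_walk_commute[OF hasse_walk_up[OF assms(3,2) d]] show ?thesis by simp
  qed (simp add: weak_order_dist_def)
qed

lemma hasse_dist_weak_order:
  assumes "0 < M" "x \<in> P" "y \<in> P"
  shows "hasse_dist P le x y = weak_order_dist lev x y"
  unfolding hasse_dist_Least_walk
proof (rule Least_equality)
  show "hasse_walk P le (weak_order_dist lev x y) x y"
    using hasse_walk_weak_order_dist assms .
next
  fix k assume walk: "hasse_walk P le k x y"
  show "weak_order_dist lev x y \<le> k"
  proof (cases "x \<noteq> y \<and> lev x = lev y")
    case True
    have "k \<noteq> 0"
    proof
      assume "k = 0"
      with walk True show False by simp
    qed
    moreover have "k \<noteq> Suc 0"
      using walk True by (auto simp: hasse_adj_weak_order)
    ultimately show ?thesis using True by (simp add: weak_order_dist_def)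
  next
    case False
    with hasse_walk_level_bound[OF walk] show ?thesis
      by (auto simp: weak_order_dist_def)
  qed
qed

end

lemma sum_abs_diff_below:
  "M \<le> x \<Longrightarrow> 2 * (\<Sum>i\<le>M. \<bar>int i - int x\<bar>) = (int M + 1) * (2 * int x - int M)"
  by (induction M) (simp_all add: algebra_simps)

lemma sum_abs_diff_atMost_add:
  "2 * (\<Sum>i\<le>a + b. \<bar>int i - int a\<bar>) = int a * (int a + 1) + int b * (int b + 1)"
proof (induction b)
  case 0
  then show ?case using sum_abs_diff_below[of a a] by (simp add: algebra_simps)
next
  case (Suc b)
  then show ?case by (simp add: algebra_simps)
qed

lemma sum_abs_diff_centre: "(\<Sum>i\<le>2 * c. \<bar>int i - int c\<bar>) = int c * (int c + 1)"
  unfolding mult_2 using sum_abs_diff_atMost_add[of c c] by simp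

lemma sum_sum_abs_diff:
  "3 * (\<Sum>i\<le>M. \<Sum>j\<le>M. \<bar>int i - int j\<bar>) = int M * (int M + 1) * (int M + 2)"
proof (induction M)
  case (Suc M)
  have "(\<Sum>j\<le>M. \<bar>int (Suc M) - int j\<bar>) = (\<Sum>i\<le>M. \<bar>int i - int (Suc M)\<bar>)"
    by (simp add: abs_minus_commute)
  then have "(\<Sum>i\<le>Suc M. \<Sum>j\<le>Suc M. \<bar>int i - int j\<bar>) =
      (\<Sum>i\<le>M. \<Sum>j\<le>M. \<bar>int i - int j\<bar>) + 2 * (\<Sum>i\<le>M. \<bar>int i - int (Suc M)\<bar>)"
    by (simp add: sum.distrib)
  with Suc.IH sum_abs_diff_below[of M "Suc M"] show ?case
    by (simp add: algebra_simps)
qed simp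

lemma sum_weak_order_dist_chain_twin:
  fixes lev :: "'a \<Rightarrow> nat" and s :: "nat \<Rightarrow> 'a"
  assumes s: "\<And>k. k \<le> M \<Longrightarrow> lev (s k) = k"
    and t: "t \<notin> s ` {..M}" "lev t = c" "c \<le> M"
  shows "int (\<Sum>x\<in>insert t (s ` {..M}). \<Sum>y\<in>insert t (s ` {..M}). weak_order_dist lev x y)
       = (\<Sum>i\<le>M. \<Sum>j\<le>M. \<bar>int i - int j\<bar>) + 2 * (\<Sum>i\<le>M. \<bar>int i - int c\<bar>) + 4"
proof -
  define d where "d x y = int (weak_order_dist lev x y)" for x y
  have inj: "inj_on s {..M}"
    by (rule inj_on_inverseI[of _ lev]) (simp add: s)
  have reindex: "(\<Sum>x\<in>s ` {..M}. g x) = (\<Sum>k\<le>M. g (s k))" for g :: "'a \<Rightarrow> int"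
    using sum.reindex[OF inj] by simp
  have fin: "finite (s ` {..M})" by simp
  have d_chain: "d (s i) (s j) = \<bar>int i - int j\<bar>" if "i \<le> M" "j \<le> M" for i j
    using that s by (cases "i = j") (auto simp: d_def weak_order_dist_def)
  have d_twin: "d t (s j) = \<bar>int j - int c\<bar> + (if j = c then 2 else 0)" if "j \<le> M" for j
    using that s t by (auto simp: d_def weak_order_dist_def)
  have d_twin': "d (s j) t = d t (s j)" for j
    by (simp add: d_def weak_order_dist_commute)
  have twin_row: "(\<Sum>j\<le>M. d t (s j)) = (\<Sum>j\<le>M. \<bar>int j - int c\<bar>) + 2"
    using t(3) by (simp add: d_twin sum.distrib)
  have "int (\<Sum>x\<in>insert t (s ` {..M}). \<Sum>y\<in>insert t (s ` {..M}). weak_order_dist lev x y)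
      = (\<Sum>x\<in>insert t (s ` {..M}). \<Sum>y\<in>insert t (s ` {..M}). d x y)"
    by (simp add: d_def)
  also have "\<dots> = d t t + (\<Sum>j\<le>M. d t (s j))
      + (\<Sum>i\<le>M. d (s i) t + (\<Sum>j\<le>M. d (s i) (s j)))"
    using t(1) by (simp add: sum.insert[OF fin] reindex)
  also have "\<dots> = 2 * (\<Sum>j\<le>M. d t (s j)) + (\<Sum>i\<le>M. \<Sum>j\<le>M. \<bar>int i - int j\<bar>)"
  proof -
    have "d t t = 0" by (simp add: d_def weak_order_dist_def)
    moreover have "(\<Sum>i\<le>M. \<Sum>j\<le>M. d (s i) (s j)) = (\<Sum>i\<le>M. \<Sum>j\<le>M. \<bar>int i - int j\<bar>)"
      by (intro sum.cong refl) (simp add: d_chain)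
    ultimately show ?thesis by (simp add: d_twin' sum.distrib)
  qed
  finally show ?thesis
    by (simp add: twin_row)
qed

lemma order_ideal_weak_order_top:
  assumes weak: "weak_order_by P le lev" and I: "I \<in> order_ideals P le"
    and x: "x \<in> I" and top: "\<And>y. y \<in> I \<Longrightarrow> lev y \<le> lev x"
  shows "I = {y \<in> P. lev y < lev x} \<union> (I \<inter> {y \<in> P. lev y = lev x})"
proof -
  have "I \<subseteq> P" "x \<in> P" using I x by (auto simp: order_ideals_def)
  with I weak x show ?thesis
    using top by (fastforce simp: order_ideals_def weak_order_by_def)
qed

text \<open>If \<open>x \<in> I - J\<close>, then \<open>J\<close> lies in the levels up to that of \<open>x\<close>, minus \<open>x\<close>, whereas
  \<open>I\<close> contains \<open>x\<close> and all lower levels; since the level of \<open>x\<close> has at most one further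
  element, \<open>card J \<le> card I\<close>.\<close>
lemma weak_order_by_order_ideals_card:
  assumes fin: "finite P" and weak: "weak_order_by P le lev"
    and small_levels: "\<And>k. card {x \<in> P. lev x = k} \<le> 2"
  shows "weak_order_by (order_ideals P le) (\<subseteq>) card"
  unfolding weak_order_by_def
proof (intro ballI)
  fix I J assume I: "I \<in> order_ideals P le" and J: "J \<in> order_ideals P le"
  then have "I \<subseteq> P" "J \<subseteq> P" by (auto simp: order_ideals_def)
  with fin have finI: "finite I" and finJ: "finite J" by (auto intro: finite_subset)
  show "I \<subseteq> J \<longleftrightarrow> I = J \<or> card I < card J"
  proof
    assume "I \<subseteq> J"
    with finJ show "I = J \<or> card I < card J"
      using psubset_card_mono by blast
  next
    assume less: "I = J \<or> card I < card J"
    show "I \<subseteq> J"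
    proof (rule ccontr)
      assume "\<not> I \<subseteq> J"
      then obtain x where x: "x \<in> I" "x \<notin> J" by blast
      with \<open>I \<subseteq> P\<close> have "x \<in> P" by blast
      define below where "below = {y \<in> P. lev y < lev x}"
      define level where "level = {y \<in> P. lev y = lev x}"
      have "J \<subseteq> below \<union> (level - {x})"
      proof
        fix y assume "y \<in> J"
        with J x \<open>x \<in> P\<close> weak have "\<not> lev x < lev y" "y \<noteq> x" "y \<in> P"
          by (auto simp: order_ideals_def weak_order_by_def)
        then show "y \<in> below \<union> (level - {x})"
          by (auto simp: below_def level_def)
      qed
      then have "card J \<le> card (below \<union> (level - {x}))"
        using fin by (intro card_mono) (auto simp: below_def level_def)
      also have "\<dots> \<le> card below + card (level - {x})"
        by (rule card_Un_le)
      also have "card (level - {x}) \<le> 1"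
        using small_levels[of "lev x"] \<open>x \<in> P\<close> by (simp add: level_def)
      also have "card below + 1 = card (insert x below)"
        using fin by (simp add: below_def)
      also have "\<dots> \<le> card I"
      proof (rule card_mono[OF finI])
        show "insert x below \<subseteq> I"
          using I x \<open>x \<in> P\<close> weak by (auto simp: below_def order_ideals_def weak_order_by_def)
      qed
      finally show False using less x by auto
    qed
  qed
qed

section \<open>The order ideals of the poset T_n\<close>

lemma T_carrier_iff [simp]:
  "A i \<in> T_carrier n \<longleftrightarrow> 1 \<le> i \<and> i \<le> n"
  "B \<in> T_carrier n" "C \<in> T_carrier n"
  "E i \<in> T_carrier n \<longleftrightarrow> 1 \<le> i \<and> i \<le> n"
  by (auto simp: T_carrier_def)

lemma finite_T_carrier: "finite (T_carrier n)"
proof -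
  have "T_carrier n \<subseteq> A ` {..n} \<union> {B, C} \<union> E ` {..n}"
    by (auto simp: T_carrier_def)
  then show ?thesis by (rule finite_subset) simp
qed

lemma weak_order_by_T_level: "weak_order_by (T_carrier n) (T_le n) (T_level n)"
  by (simp add: weak_order_by_def T_le_def)

lemma T_level_bounds: "x \<in> T_carrier n \<Longrightarrow> 1 \<le> T_level n x \<and> T_level n x \<le> 2 * n + 1"
  by (cases x) auto

lemma T_level_eqD:
  "x \<in> T_carrier n \<Longrightarrow> y \<in> T_carrier n \<Longrightarrow> T_level n x = T_level n y \<Longrightarrow>
     x = y \<or> T_level n x = n + 1"
  by (cases x; cases y) auto

lemma T_level_middle: "{x \<in> T_carrier n. T_level n x = n + 1} = {B, C}"
  using T_level_eqD by (auto elim: T_level.elims)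

lemma T_level_singleton:
  "x \<in> T_carrier n \<Longrightarrow> T_level n x \<noteq> n + 1 \<Longrightarrow>
     {y \<in> T_carrier n. T_level n y = T_level n x} = {x}"
  using T_level_eqD by fastforce

lemma T_level_surj: "1 \<le> k \<Longrightarrow> k \<le> 2 * n + 1 \<Longrightarrow> \<exists>x\<in>T_carrier n. T_level n x = k"
proof -
  assume k: "1 \<le> k" "k \<le> 2 * n + 1"
  consider "k \<le> n" | "k = n + 1" | "n + 1 < k" by linarith
  then show ?thesis
  proof cases
    case 1
    with k show ?thesis by (intro bexI[of _ "A k"]) auto
  next
    case 3
    with k show ?thesis by (intro bexI[of _ "E (k - n - 1)"]) auto
  qed (intro bexI[of _ B]; simp)
qed

lemma card_T_level:
  assumes "1 \<le> k" "k \<le> 2 * n + 1"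
  shows "card {x \<in> T_carrier n. T_level n x = k} = (if k = n + 1 then 2 else 1)"
proof (cases "k = n + 1")
  case False
  obtain x where "x \<in> T_carrier n" "T_level n x = k"
    using T_level_surj[OF assms] by blast
  with False T_level_singleton[of x n] show ?thesis by simp
qed (use T_level_middle[of n] in simp)

lemma card_T_level_le: "card {x \<in> T_carrier n. T_level n x = k} \<le> 2"
proof (cases "1 \<le> k \<and> k \<le> 2 * n + 1")
  case False
  then have empty: "{x \<in> T_carrier n. T_level n x = k} = {}"
    using T_level_bounds by fastforce
  show ?thesis unfolding empty by simp
qed (simp add: card_T_level)

definition T_down :: "nat \<Rightarrow> nat \<Rightarrow> tnode set" where
  "T_down n k = {x \<in> T_carrier n. T_level n x \<le> k}"

lemma finite_T_down: "finite (T_down n k)"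
  by (auto simp: T_down_def intro: finite_subset[OF _ finite_T_carrier])

lemma T_down_Suc:
  "T_down n (Suc k) = T_down n k \<union> {x \<in> T_carrier n. T_level n x = Suc k}"
  by (auto simp: T_down_def)

lemma card_T_down: "k \<le> 2 * n + 1 \<Longrightarrow> card (T_down n k) = (if k \<le> n then k else Suc k)"
proof (induction k)
  case 0
  have "T_down n 0 = {}" using T_level_bounds by (fastforce simp: T_down_def)
  then show ?case by simp
next
  case (Suc k)
  have "card (T_down n (Suc k)) = card (T_down n k) + card {x \<in> T_carrier n. T_level n x = Suc k}"
    unfolding T_down_Suc
    by (rule card_Un_disjoint)
      (auto simp: finite_T_down T_down_def intro: finite_subset[OF _ finite_T_carrier])
  with Suc show ?case by (simp add: card_T_level)
qed

lemma T_down_in_R: "T_down n k \<in> R n"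
  by (auto simp: R_def order_ideals_def T_down_def T_le_def)

lemma insert_T_down_in_R: "b \<in> {B, C} \<Longrightarrow> insert b (T_down n n) \<in> R n"
  by (auto simp: R_def order_ideals_def T_down_def T_le_def)

lemma card_insert_T_down:
  assumes "b \<in> {B, C}"
  shows "card (insert b (T_down n n)) = n + 1"
proof -
  have "b \<notin> T_down n n" using assms by (auto simp: T_down_def)
  then show ?thesis using finite_T_down card_T_down[of n n] by simp
qed

text \<open>The ideals of \<open>T_n\<close> of cardinality \<open>k\<close>, for \<open>k \<le> 2n + 2\<close>, choosing \<open>a_1, \<dots>, a_n, b\<close>
  at \<open>k = n + 1\<close>; the only ideal missed is \<open>{a_1, \<dots>, a_n, c}\<close>.\<close>
definition R_chain :: "nat \<Rightarrow> nat \<Rightarrow> tnode set" where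
  "R_chain n k =
     (if k \<le> n then T_down n k else if k = n + 1 then insert B (T_down n n) else T_down n (k - 1))"

lemma card_R_chain: "k \<le> 2 * n + 2 \<Longrightarrow> card (R_chain n k) = k"
  by (auto simp: R_chain_def card_T_down card_insert_T_down)

lemma T_down_in_R_chain: "m \<le> 2 * n + 1 \<Longrightarrow> T_down n m \<in> R_chain n ` {..2 * n + 2}"
proof (cases "m \<le> n")
  case True
  then show ?thesis by (intro image_eqI[of _ _ m]) (auto simp: R_chain_def)
next
  case False
  moreover assume "m \<le> 2 * n + 1"
  ultimately show ?thesis by (intro image_eqI[of _ _ "Suc m"]) (auto simp: R_chain_def)
qed

lemma R_cases:
  assumes I: "I \<in> R n"
  shows "I = insert C (T_down n n) \<or> I \<in> R_chain n ` {..2 * n + 2}"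
proof (cases "I = {}")
  case True
  then have "I = R_chain n 0"
    using T_level_bounds by (fastforce simp: R_chain_def T_down_def)
  then show ?thesis by blast
next
  case False
  have sub: "I \<subseteq> T_carrier n" using I by (simp add: R_def order_ideals_def)
  then have "finite I" using finite_T_carrier finite_subset by blast
  define m where "m = Max (T_level n ` I)"
  have "m \<in> T_level n ` I"
    unfolding m_def using \<open>finite I\<close> False by (intro Max_in) auto
  then obtain x where x: "x \<in> I" "T_level n x = m" by auto
  have top: "T_level n y \<le> T_level n x" if "y \<in> I" for y
    using that \<open>finite I\<close> x by (simp add: m_def)
  define level where "level = {y \<in> T_carrier n. T_level n y = m}"
  have I_eq: "I = {y \<in> T_carrier n. T_level n y < m} \<union> (I \<inter> level)"
    using order_ideal_weak_order_top[OF weak_order_by_T_level _ x(1) top] I x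
    by (simp add: R_def level_def)
  have "m \<le> 2 * n + 1" using x sub T_level_bounds by blast
  show ?thesis
  proof (cases "level \<subseteq> I")
    case True
    have "I = {y \<in> T_carrier n. T_level n y < m} \<union> (I \<inter> level)" by (rule I_eq)
    also have "I \<inter> level = level" using True by blast
    also have "{y \<in> T_carrier n. T_level n y < m} \<union> level = T_down n m"
      by (auto simp: T_down_def level_def)
    finally show ?thesis using \<open>m \<le> 2 * n + 1\<close> T_down_in_R_chain by blast
  next
    case False
    have "m = n + 1"
    proof (rule ccontr)
      assume "m \<noteq> n + 1"
      with x sub have "level = {x}"
        using T_level_singleton[of x n] by (auto simp: level_def)
      with x False show False by simp
    qed
    then have level: "level = {B, C}"
      using T_level_middle[of n] by (simp add: level_def)
    have below: "{y \<in> T_carrier n. T_level n y < m} = T_down n n"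
      using \<open>m = n + 1\<close> by (auto simp: T_down_def)
    from False x level \<open>m = n + 1\<close> sub
    obtain b where b: "b \<in> {B, C}" "I \<inter> level = {b}"
      by (auto simp: level_def)
    have "I = {y \<in> T_carrier n. T_level n y < m} \<union> (I \<inter> level)" by (rule I_eq)
    also have "\<dots> = insert b (T_down n n)" using below b(2) by simp
    finally show ?thesis
      using b(1) by (auto simp: R_chain_def intro: image_eqI[of _ _ "n + 1"])
  qed
qed

lemma R_decomposition: "R n = insert (insert C (T_down n n)) (R_chain n ` {..2 * n + 2})"
proof -
  have "R_chain n k \<in> R n" for k
    by (simp add: R_chain_def T_down_in_R insert_T_down_in_R)
  then show ?thesis
    using R_cases insert_T_down_in_R[of C n] by blast
qed

lemma twin_notin_R_chain: "insert C (T_down n n) \<notin> R_chain n ` {..2 * n + 2}"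
proof
  assume "insert C (T_down n n) \<in> R_chain n ` {..2 * n + 2}"
  then obtain k where k: "k \<le> 2 * n + 2" "insert C (T_down n n) = R_chain n k" by auto
  then have "k = n + 1"
    using card_R_chain[of k n] card_insert_T_down[of C n] by simp
  with k show False by (auto simp: R_chain_def T_down_def)
qed

lemma card_image_R: "card ` R n = {..2 * n + 2}"
proof -
  have "(\<lambda>k. card (R_chain n k)) ` {..2 * n + 2} = (\<lambda>k. k) ` {..2 * n + 2}"
    by (rule image_cong) (simp_all add: card_R_chain)
  then have "card ` R_chain n ` {..2 * n + 2} = {..2 * n + 2}"
    by (simp add: image_image)
  then show ?thesis
    by (simp add: R_decomposition card_insert_T_down insert_absorb)
qed

theorem theorem1p8:
  fixes n :: nat
  shows "real (dist_sum (R n) (\<subseteq>)) = 2 / 3 * (real n + 3) * (4 * real n ^ 2 + 9 * real n + 8)"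
proof -
  define S where "S = (\<Sum>i\<le>2 * n + 2. \<Sum>j\<le>2 * n + 2. \<bar>int i - int j\<bar>)"
  define S' where "S' = (\<Sum>i\<le>2 * n + 2. \<bar>int i - int (n + 1)\<bar>)"
  have weak: "weak_order_by (R n) (\<subseteq>) card"
    unfolding R_def using finite_T_carrier weak_order_by_T_level card_T_level_le
    by (rule weak_order_by_order_ideals_card)
  have "int (dist_sum (R n) (\<subseteq>)) = int (\<Sum>I\<in>R n. \<Sum>J\<in>R n. weak_order_dist card I J)"
    unfolding dist_sum_def using hasse_dist_weak_order[OF weak card_image_R] by simp
  also have "\<dots> = S + 2 * S' + 4"
    unfolding R_decomposition S_def S'_def
    by (rule sum_weak_order_dist_chain_twin[OF _ twin_notin_R_chain])
      (simp_all add: card_R_chain card_insert_T_down)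
  finally have "int (dist_sum (R n) (\<subseteq>)) = S + 2 * S' + 4" .
  moreover have "3 * S = int (2 * n + 2) * (int (2 * n + 2) + 1) * (int (2 * n + 2) + 2)"
    unfolding S_def by (rule sum_sum_abs_diff)
  moreover have "S' = int (n + 1) * (int (n + 1) + 1)"
  proof -
    have "2 * n + 2 = 2 * (n + 1)" by simp
    then show ?thesis unfolding S'_def by (simp only: sum_abs_diff_centre)
  qed
  ultimately have "3 * int (dist_sum (R n) (\<subseteq>)) = 2 * (int n + 3) * (4 * int n ^ 2 + 9 * int n + 8)"
    by (simp add: algebra_simps power2_eq_square)
  then have "real_of_int (3 * int (dist_sum (R n) (\<subseteq>)))
      = real_of_int (2 * (int n + 3) * (4 * int n ^ 2 + 9 * int n + 8))"
    by (rule arg_cong)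
  then show ?thesis by simp
qed

end
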